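(* Let $f:\mathbb{R}^n\to\mathbb{R}$ and $c:\mathbb{R}^n\to\mathbb{R}^m$ ($m<n$) be smooth, with $g=\nabla f$ and Jacobian $J=\nabla c$. Suppose noisy evaluations satisfy, for all $x$, $|\tilde f(x)-f(x)|\le\epsilon_f$, $\|\tilde c(x)-c(x)\|_1\le\epsilon_c$, $\|\tilde g(x)-g(x)\|\le\epsilon_g$, $\|\tilde J(x)-J(x)\|_{1,2}\le\epsilon_J$. Let $\{x_k\}$ be a sequence with $\sigma_{\min}(J_k)\ge\gamma>\epsilon_J$ for all $k$; set $\delta=1/(\gamma-\epsilon_J)$, $\eta=1/\gamma$. For $\beta_k>0$ let $d_k$ solve $\min_d\tfrac12\beta_k\|d\|^2+\tilde g_k^Td$ s.t. $\tilde c_k+\tilde J_kd=0$; fix $\tau\in(0,1)$ and suppose $\pi_k\ge\frac{1}{1-\tau}\|(\tilde J_k\tilde J_k^T)^{-1}\tilde J_k\tilde g_k\|_\infty$ for every $k$. Define, for $x\in\mathbb{R}^n$, $\beta>0$, $\pi>0$, $$E(x,\beta,\pi)=\frac{1}{\beta}\big(\|g(x)\|^2\eta\epsilon_J+\epsilon_g\|g(x)\|\big)+\epsilon_g\delta(\|c(x)\|_1+\epsilon_c)+\pi\Big[(2-\tau)\epsilon_c+\epsilon_J\Big(\delta(\|c(x)\|_1+\epsilon_c)+\frac{1}{\beta}\big(\|P(x)g(x)\|+\|g(x)\|\eta\epsilon_J+\epsilon_g\big)\Big)\Big].$$ Choose any $\theta_1\in[0,1)$. For any $x_k$ such that $$(1-\theta_1)\Big(\frac{1}{\beta_k}g_k^TP_kg_k+\tau\pi_k\|c_k\|_1\Big)\ge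 E(x_k,\beta_k,\pi_k),$$ we have $$\ell(x_k;d_k)\le-\theta_1\Big(\frac{1}{\beta_k}g_k^TP_kg_k+\tau\pi_k\|c_k\|_1\Big),$$ where $\ell(x_k;d_k)=g_k^Td_k+\pi_k\|c_k+J_kd_k\|_1-\pi_k\|c_k\|_1$.
   Context: $\|\cdot\|$ is the Euclidean norm; $\|A\|_{1,2}=\sup_{x\ne0}\|Ax\|_1/\|x\|$; $\sigma_{\min}$ is the smallest singular value. Subscript $k$ denotes evaluation at $x_k$. $P(x)=I-J(x)^T(J(x)J(x)^T)^{-1}J(x)$ and $P_k=P(x_k)$. *)

theory Defs
  imports "HOL-Analysis.Analysis"
begin

definition l1norm :: "real ^ 'm \<Rightarrow> real" where
  "l1norm v = (\<Sum>i\<in>UNIV. \<bar>v $ i\<bar>)"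

definition opnorm12 :: "real ^ 'n ^ 'm \<Rightarrow> real" where
  "opnorm12 A = Sup {l1norm (A *v x) / norm x | x. x \<noteq> 0}"

text \<open>Smallest singular value of an m x n matrix with m \<le> n
  (the m singular values of J are those of its transpose, a tall matrix):
  the minimum of the Euclidean norm of J^T y over unit vectors y.\<close>
definition sigma_min :: "real ^ 'n ^ 'm \<Rightarrow> real" where
  "sigma_min J = Inf {norm (transpose J *v y) | y. norm y = 1}"

definition Pmat :: "real ^ 'n ^ 'm \<Rightarrow> real ^ 'n ^ 'n" where
  "Pmat J = mat 1 - transpose J ** matrix_inv (J ** transpose J) ** J"

end

theory Submission
  imports Defs
begin

text \<open>
  With \<open>u = J\<^sup>+ c\<close> the least-norm solution of the linearized constraint and \<open>P\<close>
  the projection onto the null space, the noisy subproblem has the closed-form solution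
  \<open>d = - u\<^sub>t - P\<^sub>t g\<^sub>t / \<beta>\<close>, all quantities taken from the noisy data. Each term
  of \<open>\<ell>(x; d)\<close> is then compared with its exact counterpart: \<open>g\<^sub>t\<^sup>T u\<^sub>t\<close> is
  controlled by the multiplier estimate and the bound on \<open>\<pi>\<close>, the normal step is at most
  \<open>\<delta>\<close> times the constraint violation, and the decisive estimate
  \<open>g\<^sup>T P\<^sub>t g \<ge> g\<^sup>T P g - \<epsilon>\<^sub>J \<parallel>g\<parallel>\<^sup>2 / \<gamma>\<close> holds because every vector of the
  noisy null space lies within relative distance \<open>\<epsilon>\<^sub>J / \<gamma>\<close> of the exact one, while
  both null spaces have the same dimension. Adding up gives
  \<open>\<ell>(x; d) \<le> - (g\<^sup>T P g / \<beta> + \<tau> \<pi> \<parallel>c\<parallel>\<^sub>1) + E(x, \<beta>, \<pi>)\<close>, and the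
  hypothesis on \<open>E\<close> finishes the proof.
\<close>

lemma l1norm_nonneg: "0 \<le> l1norm v"
  unfolding l1norm_def by (simp add: sum_nonneg)

lemma l1norm_triangle: "l1norm (a + b) \<le> l1norm a + l1norm b"
  unfolding l1norm_def by (simp add: sum.distrib[symmetric] sum_mono abs_triangle_ineq)

lemma l1norm_minus_commute: "l1norm (a - b) = l1norm (b - a)"
  unfolding l1norm_def by (simp add: abs_minus_commute)

lemma norm_le_l1norm: "norm v \<le> l1norm v"
  unfolding l1norm_def by (rule norm_le_l1_cart)

lemma abs_inner_le_infnorm_l1norm: "\<bar>a \<bullet> v\<bar> \<le> infnorm a * l1norm v"
proof -
  have "\<bar>a \<bullet> v\<bar> \<le> (\<Sum>i\<in>UNIV. \<bar>a $ i\<bar> * \<bar>v $ i\<bar>)"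
    unfolding inner_vec_def by (simp add: order.trans[OF sum_abs] abs_mult)
  also have "\<dots> \<le> (\<Sum>i\<in>UNIV. infnorm a * \<bar>v $ i\<bar>)"
    by (intro sum_mono mult_right_mono component_le_infnorm_cart) auto
  finally show ?thesis by (simp add: l1norm_def sum_distrib_left)
qed

lemma l1norm_mult_le_opnorm12: "l1norm (A *v v) \<le> opnorm12 A * norm v"
proof (cases "v = 0")
  case True
  then show ?thesis by (simp add: l1norm_def)
next
  case False
  define B where "B = (\<Sum>i\<in>UNIV. \<Sum>j\<in>UNIV. \<bar>A $ i $ j\<bar>)"
  have "l1norm (A *v x) \<le> B * norm x" for x
  proof -
    have "l1norm (A *v x) \<le> (\<Sum>i\<in>UNIV. \<Sum>j\<in>UNIV. \<bar>A $ i $ j\<bar> * \<bar>x $ j\<bar>)"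
      unfolding l1norm_def matrix_vector_mult_def
      by (auto intro!: sum_mono order.trans[OF sum_abs] simp: abs_mult)
    also have "\<dots> \<le> (\<Sum>i\<in>UNIV. \<Sum>j\<in>UNIV. \<bar>A $ i $ j\<bar> * norm x)"
      by (intro sum_mono mult_left_mono component_le_norm_cart) auto
    finally show ?thesis by (simp add: B_def sum_distrib_right)
  qed
  then have "bdd_above {l1norm (A *v x) / norm x | x. x \<noteq> 0}"
    by (auto intro!: bdd_aboveI[of _ B] simp: divide_le_eq)
  then have "l1norm (A *v v) / norm v \<le> opnorm12 A"
    unfolding opnorm12_def by (rule cSup_upper[rotated]) (use False in auto)
  then show ?thesis using False by (simp add: divide_le_eq)
qed

lemma opnorm12_nonneg: "0 \<le> opnorm12 A"
  using l1norm_mult_le_opnorm12[of A "axis undefined 1"] l1norm_nonneg[of "A *v axis undefined 1"]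
  by (simp add: norm_axis_1)

lemma norm_transpose_mult_le:
  fixes A :: "real^'n^'m"
  assumes "\<And>v. norm (A *v v) \<le> e * norm v" "0 \<le> e"
  shows "norm (transpose A *v y) \<le> e * norm y"
proof -
  let ?w = "transpose A *v y"
  have "(norm ?w)\<^sup>2 = y \<bullet> (A *v ?w)"
    by (simp add: power2_norm_eq_inner dot_lmul_matrix)
  also have "\<dots> \<le> norm y * (e * norm ?w)"
    by (intro order.trans[OF norm_cauchy_schwarz] mult_left_mono assms(1)) simp
  finally have "norm ?w * norm ?w \<le> (e * norm y) * norm ?w"
    by (simp add: power2_eq_square algebra_simps)
  then show ?thesis
    using assms(2) by (cases "norm ?w = 0") auto
qed

lemma sigma_min_le: "sigma_min A * norm y \<le> norm (transpose A *v y)"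
proof (cases "y = 0")
  case True
  then show ?thesis by simp
next
  case False
  have "sigma_min A \<le> norm (transpose A *v (inverse (norm y) *\<^sub>R y))"
    unfolding sigma_min_def using False by (intro cInf_lower bdd_belowI[of _ 0]) auto
  then show ?thesis
    using False by (simp add: matrix_vector_mult_scaleR field_simps)
qed

section \<open>Least-norm solutions and the null-space projection\<close>

lemma matrix_inv_right: "invertible M \<Longrightarrow> M ** matrix_inv M = mat 1"
  unfolding invertible_def matrix_inv_def by (rule someI2_ex) auto

lemma matrix_inv_left: "invertible M \<Longrightarrow> matrix_inv M ** M = mat 1"
  unfolding invertible_def matrix_inv_def by (rule someI2_ex) auto

lemma mult_matrix_inv_mult: "invertible M \<Longrightarrow> M *v (matrix_inv M *v b) = b"
  by (simp add: matrix_vector_mul_assoc matrix_inv_right)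

lemma matrix_inv_mult_mult: "invertible M \<Longrightarrow> matrix_inv M *v (M *v b) = b"
  by (simp add: matrix_vector_mul_assoc matrix_inv_left)

lemma inner_transpose_mult: "x \<bullet> (transpose A *v y) = (A *v x) \<bullet> (y :: real^'m)"
  by (metis dot_lmul_matrix inner_commute transpose_matrix_vector)

lemma norm_transpose_le_norm_mult_transpose:
  fixes A :: "real^'n^'m"
  assumes "\<And>y. k * norm y \<le> norm (transpose A *v y)"
  shows "k * norm (transpose A *v y) \<le> norm (A *v (transpose A *v y))"
proof (cases "k \<le> 0")
  case True
  then show ?thesis by (simp add: mult_nonpos_nonneg order.trans[OF _ norm_ge_zero])
next
  case False
  let ?w = "transpose A *v y"
  have "k * (norm ?w)\<^sup>2 = k * (y \<bullet> (A *v ?w))"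
    by (simp add: power2_norm_eq_inner dot_lmul_matrix)
  also have "\<dots> \<le> (k * norm y) * norm (A *v ?w)"
    using False by (simp add: mult.assoc mult_left_mono norm_cauchy_schwarz)
  also have "\<dots> \<le> norm ?w * norm (A *v ?w)"
    by (intro mult_right_mono assms) simp
  finally show ?thesis
    by (cases "norm ?w = 0") (auto simp: power2_eq_square mult.assoc)
qed

lemma invertible_mult_transpose:
  fixes A :: "real^'n^'m"
  assumes "0 < k" "\<And>y. k * norm y \<le> norm (transpose A *v y)"
  shows "invertible (A ** transpose A)"
  unfolding invertible_left_inverse matrix_left_invertible_ker
proof (intro allI impI)
  fix y
  assume "(A ** transpose A) *v y = 0"
  then have "k * norm (transpose A *v y) \<le> 0"
    using norm_transpose_le_norm_mult_transpose[OF assms(2), of y]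
    by (metis matrix_vector_mul_assoc norm_zero)
  then have "transpose A *v y = 0"
    using assms(1) by (simp add: mult_le_0_iff)
  then have "k * norm y \<le> 0"
    using assms(2)[of y] by simp
  then show "y = 0"
    using assms(1) by (simp add: mult_le_0_iff)
qed

definition min_norm_solution :: "real^'n^'m \<Rightarrow> real^'m \<Rightarrow> real^'n" where
  "min_norm_solution A b = transpose A *v (matrix_inv (A ** transpose A) *v b)"

lemma mult_min_norm_solution:
  "invertible (A ** transpose A) \<Longrightarrow> A *v min_norm_solution A b = b"
  unfolding min_norm_solution_def by (metis matrix_vector_mul_assoc mult_matrix_inv_mult)

lemma inner_min_norm_solution:
  assumes "invertible (A ** transpose A)"
  shows "v \<bullet> min_norm_solution A b = (matrix_inv (A ** transpose A) *v (A *v v)) \<bullet> b"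
proof -
  let ?M = "A ** transpose A"
  have sym: "transpose ?M = ?M"
    by (simp add: matrix_transpose_mul)
  have "v \<bullet> min_norm_solution A b = (A *v v) \<bullet> (matrix_inv ?M *v b)"
    unfolding min_norm_solution_def by (rule inner_transpose_mult)
  also have "\<dots> = (?M *v (matrix_inv ?M *v (A *v v))) \<bullet> (matrix_inv ?M *v b)"
    by (simp add: mult_matrix_inv_mult[OF assms])
  also have "\<dots> = (matrix_inv ?M *v (A *v v)) \<bullet> (?M *v (matrix_inv ?M *v b))"
    by (metis inner_transpose_mult sym)
  finally show ?thesis
    by (simp add: mult_matrix_inv_mult[OF assms])
qed

lemma norm_min_norm_solution_le:
  fixes A :: "real^'n^'m"
  assumes "invertible (A ** transpose A)" "\<And>y. k * norm y \<le> norm (transpose A *v y)"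
  shows "k * norm (min_norm_solution A b) \<le> norm b"
  using norm_transpose_le_norm_mult_transpose[OF assms(2)] mult_min_norm_solution[OF assms(1)]
  unfolding min_norm_solution_def by metis

lemma min_norm_solution_transpose:
  "invertible (A ** transpose A) \<Longrightarrow> min_norm_solution A (A *v (transpose A *v y)) = transpose A *v y"
  unfolding min_norm_solution_def by (metis matrix_vector_mul_assoc matrix_inv_mult_mult)

lemma Pmat_mult: "Pmat A *v v = v - min_norm_solution A (A *v v)"
  by (simp add: Pmat_def min_norm_solution_def matrix_vector_mult_diff_rdistrib
      matrix_vector_mul_assoc matrix_mul_assoc)

lemma mult_Pmat: "invertible (A ** transpose A) \<Longrightarrow> A *v (Pmat A *v v) = 0"
  by (simp add: Pmat_mult matrix_vector_mult_diff_distrib mult_min_norm_solution)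

lemma Pmat_null: "A *v v = 0 \<Longrightarrow> Pmat A *v v = v"
  by (simp add: Pmat_mult min_norm_solution_def)

lemma Pmat_transpose: "invertible (A ** transpose A) \<Longrightarrow> Pmat A *v (transpose A *v y) = 0"
  by (simp add: Pmat_mult min_norm_solution_transpose del: transpose_matrix_vector)

lemma inner_Pmat_min_norm_solution:
  "invertible (A ** transpose A) \<Longrightarrow> (Pmat A *v v) \<bullet> min_norm_solution A b = 0"
  by (simp add: inner_min_norm_solution mult_Pmat)

lemma inner_Pmat:
  assumes "invertible (A ** transpose A)"
  shows "u \<bullet> (Pmat A *v v) = (Pmat A *v u) \<bullet> (Pmat A *v v)"
  using inner_Pmat_min_norm_solution[OF assms, of v "A *v u"]
  by (simp add: Pmat_mult[of A u] inner_diff_right inner_commute[of _ "Pmat A *v v"])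

lemma inner_Pmat_self:
  "invertible (A ** transpose A) \<Longrightarrow> v \<bullet> (Pmat A *v v) = (norm (Pmat A *v v))\<^sup>2"
  by (subst inner_Pmat) (simp_all add: power2_norm_eq_inner)

lemma norm_Pmat_pythagoras:
  assumes "invertible (A ** transpose A)"
  shows "(norm v)\<^sup>2 = (norm (Pmat A *v v))\<^sup>2 + (norm (min_norm_solution A (A *v v)))\<^sup>2"
proof -
  have "v = Pmat A *v v + min_norm_solution A (A *v v)"
    by (simp add: Pmat_mult)
  then show ?thesis
    by (metis inner_Pmat_min_norm_solution[OF assms] norm_add_Pythagorean orthogonal_def)
qed

lemma inner_Pmat_decomp:
  assumes "invertible (A ** transpose A)"
  shows "u \<bullet> v = (Pmat A *v u) \<bullet> (Pmat A *v v)
    + min_norm_solution A (A *v u) \<bullet> min_norm_solution A (A *v v)"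
proof -
  have "u \<bullet> v = (Pmat A *v u + min_norm_solution A (A *v u))
      \<bullet> (Pmat A *v v + min_norm_solution A (A *v v))"
    by (simp add: Pmat_mult)
  moreover have "(Pmat A *v u) \<bullet> min_norm_solution A (A *v v) = 0"
    by (rule inner_Pmat_min_norm_solution[OF assms])
  moreover have "min_norm_solution A (A *v u) \<bullet> (Pmat A *v v) = 0"
    by (subst inner_commute) (rule inner_Pmat_min_norm_solution[OF assms])
  ultimately show ?thesis
    by (simp add: inner_add_left inner_add_right)
qed

lemma norm_min_norm_solution_mult_le:
  "invertible (A ** transpose A) \<Longrightarrow> norm (min_norm_solution A (A *v v)) \<le> norm v"
  by (metis norm_Pmat_pythagoras le_add_same_cancel2 norm_ge_zero power2_le_imp_le zero_le_power2)

lemma norm_Pmat_le: "invertible (A ** transpose A) \<Longrightarrow> norm (Pmat A *v v) \<le> norm v"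
  by (metis norm_Pmat_pythagoras le_add_same_cancel1 norm_ge_zero power2_le_imp_le zero_le_power2)

section \<open>Perturbation of the null-space projection\<close>

lemma sq_diff_le_of_sqrt_bound:
  fixes s a b p :: real
  assumes s: "0 \<le> s" "s < 1" and nonneg: "0 \<le> a" "0 \<le> b" "0 \<le> p"
    and bound: "sqrt (1 - s\<^sup>2) * a - s * b \<le> p"
  shows "a\<^sup>2 - p\<^sup>2 \<le> s * (a\<^sup>2 + b\<^sup>2)"
proof -
  define t where "t = sqrt (1 - s\<^sup>2)"
  have t: "0 \<le> t" "t\<^sup>2 = 1 - s\<^sup>2"
    using s by (simp_all add: t_def abs_square_le_1)
  show ?thesis
  proof (cases "t * a \<le> s * b")
    case True
    then have "(t * a)\<^sup>2 \<le> (s * b)\<^sup>2"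
      using t nonneg by (simp add: power_mono)
    then have "(1 - s\<^sup>2) * a\<^sup>2 \<le> s\<^sup>2 * b\<^sup>2"
      using t by (simp add: power_mult_distrib)
    also have "\<dots> \<le> (1 + s) * s * b\<^sup>2"
      using s by (intro mult_right_mono) (simp_all add: power2_eq_square algebra_simps)
    finally have "(1 + s) * ((1 - s) * a\<^sup>2) \<le> (1 + s) * (s * b\<^sup>2)"
      by (simp add: power2_eq_square algebra_simps)
    then have "(1 - s) * a\<^sup>2 \<le> s * b\<^sup>2"
      using s by simp
    then show ?thesis by (simp add: algebra_simps add_increasing)
  next
    case False
    have amgm: "2 * t * a * b \<le> (1 - s) * a\<^sup>2 + (1 + s) * b\<^sup>2"
    proof -
      have "t = sqrt (1 - s) * sqrt (1 + s)"
        by (simp add: t_def real_sqrt_mult[symmetric] power2_eq_square algebra_simps)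
      moreover have "0 \<le> (sqrt (1 - s) * a - sqrt (1 + s) * b)\<^sup>2" by simp
      ultimately show ?thesis
        using s by (simp add: power2_eq_square algebra_simps)
    qed
    have "a\<^sup>2 - s * (a\<^sup>2 + b\<^sup>2) \<le> (t * a - s * b)\<^sup>2"
      using mult_left_mono[OF amgm s(1)]
      by (simp add: power2_diff power_mult_distrib t(2) algebra_simps power2_eq_square[of s])
    also have "\<dots> \<le> p\<^sup>2"
      using False bound by (simp add: t_def power_mono)
    finally show ?thesis by simp
  qed
qed

locale null_space_perturbation =
  fixes J Jt :: "real^'n^'m" and gamma e :: real
  assumes norm_transpose_J_ge: "\<And>y. gamma * norm y \<le> norm (transpose J *v y)"
    and norm_error_J: "\<And>v. norm ((J - Jt) *v v) \<le> e * norm v"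
    and e_nonneg: "0 \<le> e" and e_less: "e < gamma"
begin

lemma gamma_pos: "0 < gamma"
  using e_nonneg e_less by linarith

lemma invertible_J: "invertible (J ** transpose J)"
  using gamma_pos norm_transpose_J_ge by (rule invertible_mult_transpose)

lemma norm_transpose_Jt_ge: "(gamma - e) * norm y \<le> norm (transpose Jt *v y)"
proof -
  have "norm (transpose (J - Jt) *v y) \<le> e * norm y"
    using norm_error_J e_nonneg by (rule norm_transpose_mult_le)
  moreover have "transpose J *v y = transpose Jt *v y + transpose (J - Jt) *v y"
    by (simp add: vector_matrix_mult_diff_rdistrib)
  then have "norm (transpose J *v y) \<le> norm (transpose Jt *v y) + norm (transpose (J - Jt) *v y)"
    by (metis norm_triangle_ineq)
  ultimately show ?thesis
    using norm_transpose_J_ge[of y] by (simp add: algebra_simps)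
qed

lemma invertible_Jt: "invertible (Jt ** transpose Jt)"
  by (rule invertible_mult_transpose[OF _ norm_transpose_Jt_ge]) (use e_less in simp)

lemma norm_min_norm_solution_null_le:
  assumes "Jt *v v = 0"
  shows "norm (min_norm_solution J (J *v v)) \<le> e / gamma * norm v"
proof -
  have "J *v v = (J - Jt) *v v"
    using assms by (simp add: matrix_vector_mult_diff_rdistrib)
  then have "gamma * norm (min_norm_solution J (J *v v)) \<le> e * norm v"
    using norm_min_norm_solution_le[OF invertible_J norm_transpose_J_ge, of "J *v v"]
      norm_error_J[of v]
    by simp
  then show ?thesis
    using gamma_pos by (simp add: field_simps)
qed

lemma norm_Pmat_null_ge:
  assumes "Jt *v v = 0"
  shows "sqrt (1 - (e / gamma)\<^sup>2) * norm v \<le> norm (Pmat J *v v)"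
proof -
  let ?s = "e / gamma"
  have "(norm (min_norm_solution J (J *v v)))\<^sup>2 \<le> ?s\<^sup>2 * (norm v)\<^sup>2"
    using norm_min_norm_solution_null_le[OF assms]
    by (metis norm_ge_zero power_mono power_mult_distrib)
  moreover have "(1 - ?s\<^sup>2) * (norm v)\<^sup>2 = (norm v)\<^sup>2 - ?s\<^sup>2 * (norm v)\<^sup>2"
    by (simp add: left_diff_distrib)
  ultimately have "(1 - ?s\<^sup>2) * (norm v)\<^sup>2 \<le> (norm (Pmat J *v v))\<^sup>2"
    using norm_Pmat_pythagoras[OF invertible_J, of v] by linarith
  then show ?thesis
    by (metis real_sqrt_le_mono real_sqrt_mult real_sqrt_abs abs_norm_cancel)
qed

text \<open>The two null spaces have the same dimension; this enters here through the invertibility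
  of \<^term>\<open>Jt ** transpose J\<close>, which follows from the perturbation bound.\<close>
lemma exists_null_lift:
  assumes "J *v a = 0"
  obtains v where "Jt *v v = 0" "Pmat J *v v = a"
proof -
  have inv: "invertible (Jt ** transpose J)"
    unfolding invertible_left_inverse matrix_left_invertible_ker
  proof (intro allI impI)
    fix z
    assume "(Jt ** transpose J) *v z = 0"
    then have "Jt *v (transpose J *v z) = 0"
      by (simp only: matrix_vector_mul_assoc)
    from norm_min_norm_solution_null_le[OF this]
    have "norm (transpose J *v z) \<le> e / gamma * norm (transpose J *v z)"
      by (simp only: min_norm_solution_transpose[OF invertible_J])
    then have "(1 - e / gamma) * norm (transpose J *v z) \<le> 0"
      by (simp add: algebra_simps)
    moreover have "0 < 1 - e / gamma"
      using e_less gamma_pos by simp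
    ultimately have "norm (transpose J *v z) = 0"
      by (simp add: mult_le_0_iff)
    then show "z = 0"
      using norm_transpose_J_ge[of z] gamma_pos by (simp add: mult_le_0_iff)
  qed
  define v where "v = a - transpose J *v (matrix_inv (Jt ** transpose J) *v (Jt *v a))"
  have "Jt *v (transpose J *v (matrix_inv (Jt ** transpose J) *v (Jt *v a))) = Jt *v a"
    by (rule trans[OF matrix_vector_mul_assoc mult_matrix_inv_mult[OF inv]])
  then have "Jt *v v = 0"
    by (simp add: v_def matrix_vector_mult_diff_distrib)
  moreover have "Pmat J *v v = a"
    by (simp add: v_def matrix_vector_mult_diff_distrib Pmat_null[OF assms]
        Pmat_transpose[OF invertible_J] del: transpose_matrix_vector)
  ultimately show ?thesis by (rule that)
qed

lemma norm_Pmat_perturbed_ge: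
  "sqrt (1 - (e / gamma)\<^sup>2) * norm (Pmat J *v g) - e / gamma * norm (g - Pmat J *v g)
    \<le> norm (Pmat Jt *v g)"
proof -
  let ?s = "e / gamma" and ?a = "Pmat J *v g" and ?b = "g - Pmat J *v g" and ?p = "Pmat Jt *v g"
  obtain v where v: "Jt *v v = 0" "Pmat J *v v = ?a"
    using exists_null_lift[OF mult_Pmat[OF invertible_J]] .
  have "(norm ?a)\<^sup>2 - ?s * norm ?b * norm v \<le> norm ?p * norm v"
  proof -
    let ?w = "min_norm_solution J (J *v v)"
    have "g \<bullet> v = (norm ?a)\<^sup>2 + ?b \<bullet> ?w"
      using inner_Pmat_decomp[OF invertible_J, of g v] v(2)
      by (simp add: Pmat_mult[of J g] power2_norm_eq_inner)
    moreover have "- (?b \<bullet> ?w) \<le> norm ?b * norm ?w"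
      using Cauchy_Schwarz_ineq2[of ?b ?w] by linarith
    moreover have "norm ?b * norm ?w \<le> ?s * norm ?b * norm v"
      using mult_left_mono[OF norm_min_norm_solution_null_le[OF v(1)] norm_ge_zero[of ?b]]
      by (simp only: ac_simps)
    moreover have "g \<bullet> v \<le> norm ?p * norm v"
      using inner_Pmat[OF invertible_Jt, of g v] Pmat_null[OF v(1)] norm_cauchy_schwarz[of ?p v]
      by simp
    ultimately show ?thesis
      by linarith
  qed
  moreover have "sqrt (1 - ?s\<^sup>2) * norm v \<le> norm ?a"
    using norm_Pmat_null_ge[OF v(1)] v(2) by simp
  from mult_left_mono[OF this norm_ge_zero[of ?a]]
  have "(sqrt (1 - ?s\<^sup>2) * norm ?a - ?s * norm ?b) * norm v \<le> (norm ?a)\<^sup>2 - ?s * norm ?b * norm v"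
    by (simp add: power2_eq_square algebra_simps)
  ultimately have "(sqrt (1 - ?s\<^sup>2) * norm ?a - ?s * norm ?b) * norm v \<le> norm ?p * norm v"
    by linarith
  show ?thesis
  proof (cases "v = 0")
    case True
    then have "sqrt (1 - ?s\<^sup>2) * norm ?a = 0"
      using v(2) by simp
    moreover have "0 \<le> ?s * norm ?b"
      using e_nonneg gamma_pos by simp
    ultimately show ?thesis
      using norm_ge_zero[of ?p] by linarith
  next
    case False
    with \<open>(sqrt (1 - ?s\<^sup>2) * norm ?a - ?s * norm ?b) * norm v \<le> norm ?p * norm v\<close>
    show ?thesis
      by (simp add: mult_le_cancel_right)
  qed
qed

lemma inner_Pmat_perturbed_le:
  "g \<bullet> (Pmat J *v g) - g \<bullet> (Pmat Jt *v g) \<le> e / gamma * (norm g)\<^sup>2"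
proof -
  have "(norm g)\<^sup>2 = (norm (Pmat J *v g))\<^sup>2 + (norm (g - Pmat J *v g))\<^sup>2"
    using norm_Pmat_pythagoras[OF invertible_J, of g] by (simp add: Pmat_mult)
  moreover have "(norm (Pmat J *v g))\<^sup>2 - (norm (Pmat Jt *v g))\<^sup>2
      \<le> e / gamma * ((norm (Pmat J *v g))\<^sup>2 + (norm (g - Pmat J *v g))\<^sup>2)"
    using e_nonneg e_less gamma_pos
    by (intro sq_diff_le_of_sqrt_bound norm_Pmat_perturbed_ge) simp_all
  ultimately show ?thesis
    by (simp add: inner_Pmat_self[OF invertible_J] inner_Pmat_self[OF invertible_Jt])
qed


lemma norm_Pmat_Jt_min_norm_solution_J_le:
  "gamma * norm (Pmat Jt *v min_norm_solution J b) \<le> e * norm (min_norm_solution J b)"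
proof -
  define y where "y = matrix_inv (J ** transpose J) *v b"
  have "Pmat Jt *v (transpose J *v y) = Pmat Jt *v (transpose (J - Jt) *v y)"
    using Pmat_transpose[OF invertible_Jt, of y]
    by (simp add: vector_matrix_mult_diff_rdistrib matrix_vector_mult_diff_distrib)
  then have "norm (Pmat Jt *v (transpose J *v y)) \<le> e * norm y"
    using norm_Pmat_le[OF invertible_Jt] norm_transpose_mult_le[OF norm_error_J e_nonneg]
    by (metis order_trans)
  then have "gamma * norm (Pmat Jt *v (transpose J *v y)) \<le> e * (gamma * norm y)"
    using gamma_pos by (simp add: mult.left_commute)
  also have "\<dots> \<le> e * norm (transpose J *v y)"
    using norm_transpose_J_ge e_nonneg by (rule mult_left_mono)
  finally show ?thesis
    by (simp add: y_def min_norm_solution_def)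
qed

end

section \<open>The equality-constrained quadratic subproblem\<close>

lemma eq_0_of_nonneg_quadratic:
  fixes a q :: real
  assumes "\<And>t. 0 \<le> t * a + t\<^sup>2 * q"
  shows "a = 0"
proof -
  define t where "t = - a / (\<bar>q\<bar> + 1)"
  have tu: "t * (\<bar>q\<bar> + 1) = - a"
    by (simp add: t_def add_nonneg_eq_0_iff)
  have "0 \<le> (t * a + t\<^sup>2 * q) * (\<bar>q\<bar> + 1)\<^sup>2"
    using assms by simp
  also have "\<dots> = a * (t * (\<bar>q\<bar> + 1)) * (\<bar>q\<bar> + 1) + q * (t * (\<bar>q\<bar> + 1))\<^sup>2"
    by (simp add: power2_eq_square algebra_simps)
  also have "\<dots> = a\<^sup>2 * (q - \<bar>q\<bar> - 1)"
    unfolding tu by (simp add: power2_eq_square algebra_simps)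
  also have "\<dots> \<le> - a\<^sup>2"
    using mult_right_mono[OF abs_ge_self[of q] zero_le_power2[of a]] by (simp add: algebra_simps)
  finally show ?thesis by simp
qed

lemma eq_constrained_qp_solution:
  fixes A :: "real^'n^'m"
  assumes inv: "invertible (A ** transpose A)" and beta: "0 < beta"
    and feas: "r + A *v d = 0"
    and opt: "\<And>e. r + A *v e = 0 \<Longrightarrow>
      1/2 * beta * (norm d)\<^sup>2 + q \<bullet> d \<le> 1/2 * beta * (norm e)\<^sup>2 + q \<bullet> e"
  shows "d = - min_norm_solution A r - (1 / beta) *\<^sub>R (Pmat A *v q)"
proof -
  define d0 where "d0 = - min_norm_solution A r - (1 / beta) *\<^sub>R (Pmat A *v q)"
  define e where "e = d - d0"
  have "A *v d = - r"
    using feas by (metis add.commute eq_neg_iff_add_eq_0)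
  then have null: "A *v e = 0"
    by (simp add: e_def d0_def matrix_vector_mult_diff_distrib matrix_vector_mult_scaleR
        mult_min_norm_solution[OF inv] mult_Pmat[OF inv] vec.neg)
  have "(beta *\<^sub>R d + q) \<bullet> e = 0"
  proof (rule eq_0_of_nonneg_quadratic)
    fix t
    have "r + A *v (d + t *\<^sub>R e) = 0"
      using feas null by (simp add: matrix_vector_right_distrib matrix_vector_mult_scaleR)
    then have "1/2 * beta * (norm d)\<^sup>2 + q \<bullet> d
        \<le> 1/2 * beta * (norm (d + t *\<^sub>R e))\<^sup>2 + q \<bullet> (d + t *\<^sub>R e)"
      by (rule opt)
    moreover have "(norm (d + t *\<^sub>R e))\<^sup>2 = (norm d)\<^sup>2 + 2 * t * (d \<bullet> e) + t\<^sup>2 * (norm e)\<^sup>2"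
      unfolding power2_norm_eq_inner
      by (simp add: inner_add_left inner_add_right inner_commute algebra_simps power2_eq_square)
    ultimately show "0 \<le> t * ((beta *\<^sub>R d + q) \<bullet> e) + t\<^sup>2 * (1/2 * beta * (norm e)\<^sup>2)"
      by (simp add: inner_add_left inner_add_right algebra_simps)
  qed
  moreover have "(beta *\<^sub>R d0 + q) \<bullet> e = 0"
  proof -
    have "beta *\<^sub>R d0 + q = min_norm_solution A (A *v q) - beta *\<^sub>R min_norm_solution A r"
      using beta by (simp add: d0_def Pmat_mult algebra_simps)
    then show ?thesis
      by (simp add: inner_commute[of _ e] inner_diff_right inner_min_norm_solution[OF inv] null)
  qed
  ultimately have "beta * (e \<bullet> e) = 0"
    by (simp add: e_def inner_diff_left inner_add_left algebra_simps)
  then show ?thesis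
    using beta by (simp add: e_def d0_def)
qed

section \<open>Model reduction under noisy data\<close>

locale noisy_linearization =
  fixes J Jt :: "real^'n^'m" and g gt :: "real^'n" and c ct :: "real^'m"
    and eps_c eps_g eps_J gamma :: real
  assumes noise_c: "l1norm (ct - c) \<le> eps_c"
    and noise_g: "norm (gt - g) \<le> eps_g"
    and noise_J: "opnorm12 (Jt - J) \<le> eps_J"
    and sigma_min_J: "gamma \<le> sigma_min J"
    and eps_J_less: "eps_J < gamma"
begin

lemma eps_J_nonneg: "0 \<le> eps_J"
  using opnorm12_nonneg noise_J by (rule order_trans)

lemma eps_g_nonneg: "0 \<le> eps_g"
  using norm_ge_zero noise_g by (rule order_trans)

lemma l1norm_ct_le: "l1norm ct \<le> l1norm c + eps_c"
  using l1norm_triangle[of c "ct - c"] noise_c by simp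

lemma l1norm_error_J: "l1norm ((J - Jt) *v v) \<le> eps_J * norm v"
proof -
  have "l1norm ((Jt - J) *v v) \<le> eps_J * norm v"
    using l1norm_mult_le_opnorm12[of "Jt - J" v] mult_right_mono[OF noise_J norm_ge_zero[of v]]
    by linarith
  then show ?thesis
    by (simp add: matrix_vector_mult_diff_rdistrib l1norm_minus_commute)
qed

end

sublocale noisy_linearization \<subseteq> null_space_perturbation J Jt gamma eps_J
proof
  show "gamma * norm y \<le> norm (transpose J *v y)" for y
    using mult_right_mono[OF sigma_min_J norm_ge_zero] sigma_min_le by (rule order_trans)
  show "norm ((J - Jt) *v v) \<le> eps_J * norm v" for v
    using norm_le_l1norm l1norm_error_J by (rule order_trans)
qed (fact eps_J_nonneg eps_J_less)+

context noisy_linearization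
begin

lemma norm_min_norm_solution_ct_le:
  "norm (min_norm_solution Jt ct) \<le> 1 / (gamma - eps_J) * (l1norm c + eps_c)"
proof -
  have "(gamma - eps_J) * norm (min_norm_solution Jt ct) \<le> l1norm c + eps_c"
    using norm_min_norm_solution_le[OF invertible_Jt norm_transpose_Jt_ge, of ct]
      norm_le_l1norm[of ct] l1norm_ct_le by linarith
  then show ?thesis
    using eps_J_less by (simp add: field_simps)
qed

lemma inner_Pmat_Jt_ge:
  "g \<bullet> (Pmat J *v g) - ((norm g)\<^sup>2 * (1 / gamma) * eps_J + eps_g * norm g) \<le> g \<bullet> (Pmat Jt *v gt)"
proof -
  have "g \<bullet> (Pmat J *v g) - g \<bullet> (Pmat Jt *v g) \<le> eps_J / gamma * (norm g)\<^sup>2"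
    by (rule inner_Pmat_perturbed_le)
  moreover have "- (g \<bullet> (Pmat Jt *v (gt - g))) \<le> eps_g * norm g"
  proof -
    have "- (g \<bullet> (Pmat Jt *v (gt - g))) \<le> norm g * norm (Pmat Jt *v (gt - g))"
      using Cauchy_Schwarz_ineq2[of g "Pmat Jt *v (gt - g)"] by linarith
    also have "\<dots> \<le> norm g * eps_g"
      using norm_Pmat_le[OF invertible_Jt] noise_g
      by (intro mult_left_mono) (auto intro: order_trans)
    finally show ?thesis by (simp add: mult.commute)
  qed
  ultimately show ?thesis
    by (simp add: matrix_vector_mult_diff_distrib inner_diff_right algebra_simps)
qed

lemma norm_Pmat_Jt_le:
  "norm (Pmat Jt *v gt) \<le> norm (Pmat J *v g) + norm g * (1 / gamma) * eps_J + eps_g"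
proof -
  let ?r = "min_norm_solution J (J *v g)"
  have "gt = Pmat J *v g + ?r + (gt - g)"
    by (simp add: Pmat_mult)
  then have "norm (Pmat Jt *v gt)
      \<le> norm (Pmat Jt *v (Pmat J *v g)) + norm (Pmat Jt *v ?r) + norm (Pmat Jt *v (gt - g))"
    by (metis matrix_vector_right_distrib norm_triangle_le norm_triangle_ineq add_mono order_refl)
  moreover have "norm (Pmat Jt *v (Pmat J *v g)) \<le> norm (Pmat J *v g)"
    by (rule norm_Pmat_le[OF invertible_Jt])
  moreover have "norm (Pmat Jt *v ?r) \<le> norm g * (1 / gamma) * eps_J"
  proof -
    have "gamma * norm (Pmat Jt *v ?r) \<le> eps_J * norm g"
      using norm_Pmat_Jt_min_norm_solution_J_le
        mult_left_mono[OF norm_min_norm_solution_mult_le[OF invertible_J] eps_J_nonneg]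
      by (rule order_trans)
    then show ?thesis
      using gamma_pos by (simp add: field_simps)
  qed
  moreover have "norm (Pmat Jt *v (gt - g)) \<le> eps_g"
    using norm_Pmat_le[OF invertible_Jt] noise_g by (rule order_trans)
  ultimately show ?thesis
    by linarith
qed

lemma l1norm_residual_le:
  assumes "ct + Jt *v d = 0"
  shows "l1norm (c + J *v d) \<le> eps_c + eps_J * norm d"
proof -
  have "Jt *v d = - ct"
    using assms by (metis add.commute eq_neg_iff_add_eq_0)
  then have residual: "c + J *v d = (c - ct) + (J - Jt) *v d"
    by (simp add: matrix_vector_mult_diff_rdistrib)
  show ?thesis
    unfolding residual
    using l1norm_triangle[of "c - ct" "(J - Jt) *v d"] l1norm_error_J[of d] noise_c
    by (simp add: l1norm_minus_commute[of c])
qed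

lemma inner_min_norm_solution_ct_ge:
  "- (gt \<bullet> min_norm_solution Jt ct)
    \<le> infnorm (matrix_inv (Jt ** transpose Jt) *v (Jt *v gt)) * (l1norm c + eps_c)"
proof -
  let ?lam = "matrix_inv (Jt ** transpose Jt) *v (Jt *v gt)"
  have "- (gt \<bullet> min_norm_solution Jt ct) \<le> infnorm ?lam * l1norm ct"
    using inner_min_norm_solution[OF invertible_Jt, of gt ct]
      abs_inner_le_infnorm_l1norm[of ?lam ct]
    by linarith
  also have "\<dots> \<le> infnorm ?lam * (l1norm c + eps_c)"
    using l1norm_ct_le by (intro mult_left_mono) (simp_all add: infnorm_pos_le)
  finally show ?thesis .
qed

lemma norm_qp_step_le:
  assumes "0 < beta"
  shows "norm (- min_norm_solution Jt ct - (1 / beta) *\<^sub>R (Pmat Jt *v gt))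
    \<le> 1 / (gamma - eps_J) * (l1norm c + eps_c)
      + 1 / beta * (norm (Pmat J *v g) + norm g * (1 / gamma) * eps_J + eps_g)"
proof -
  have "norm (- min_norm_solution Jt ct - (1 / beta) *\<^sub>R (Pmat Jt *v gt))
      \<le> norm (min_norm_solution Jt ct) + 1 / beta * norm (Pmat Jt *v gt)"
    using norm_triangle_ineq4[of "- min_norm_solution Jt ct" "(1 / beta) *\<^sub>R (Pmat Jt *v gt)"] assms
    by simp
  then show ?thesis
    using norm_min_norm_solution_ct_le mult_left_mono[OF norm_Pmat_Jt_le, of "1 / beta"] assms
    by simp
qed

theorem model_reduction_le:
  fixes beta tau pi :: real and d :: "real^'n"
  assumes beta: "0 < beta" and tau: "0 < tau" "tau < 1"
    and pi: "1 / (1 - tau) * infnorm (matrix_inv (Jt ** transpose Jt) *v (Jt *v gt)) \<le> pi"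
    and feas: "ct + Jt *v d = 0"
    and opt: "\<And>e. ct + Jt *v e = 0 \<Longrightarrow>
      1/2 * beta * (norm d)\<^sup>2 + gt \<bullet> d \<le> 1/2 * beta * (norm e)\<^sup>2 + gt \<bullet> e"
  shows "g \<bullet> d + pi * l1norm (c + J *v d) - pi * l1norm c
    \<le> - (1 / beta * (g \<bullet> (Pmat J *v g)) + tau * pi * l1norm c)
      + (1 / beta * ((norm g)\<^sup>2 * (1 / gamma) * eps_J + eps_g * norm g)
         + eps_g * (1 / (gamma - eps_J)) * (l1norm c + eps_c)
         + pi * ((2 - tau) * eps_c
            + eps_J * (1 / (gamma - eps_J) * (l1norm c + eps_c)
               + 1 / beta * (norm (Pmat J *v g) + norm g * (1 / gamma) * eps_J + eps_g))))"
    (is "_ \<le> _ + (_ + _ + pi * (_ + eps_J * ?step))")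
proof -
  let ?u = "min_norm_solution Jt ct" and ?p = "Pmat Jt *v gt"
  let ?lam = "matrix_inv (Jt ** transpose Jt) *v (Jt *v gt)"
  have d: "d = - ?u - (1 / beta) *\<^sub>R ?p"
    using invertible_Jt beta feas opt by (rule eq_constrained_qp_solution)
  have lam: "infnorm ?lam \<le> (1 - tau) * pi"
    using pi tau by (simp add: field_simps)
  have "0 \<le> (1 - tau) * pi"
    using infnorm_pos_le lam by (rule order_trans)
  then have pi_nonneg: "0 \<le> pi"
    using tau by (simp add: zero_le_mult_iff)
  have c_nonneg: "0 \<le> l1norm c + eps_c"
    using l1norm_ct_le l1norm_nonneg[of ct] by linarith
  have multiplier: "- (gt \<bullet> ?u) \<le> (1 - tau) * pi * (l1norm c + eps_c)"
    using inner_min_norm_solution_ct_ge mult_right_mono[OF lam c_nonneg] by (rule order_trans)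
  have gradient: "(gt - g) \<bullet> ?u \<le> eps_g * (1 / (gamma - eps_J)) * (l1norm c + eps_c)"
    using norm_cauchy_schwarz[of "gt - g" ?u] mult_mono[OF noise_g norm_min_norm_solution_ct_le]
      eps_g_nonneg by (simp add: mult.assoc)
  have curvature: "- (1 / beta * (g \<bullet> ?p))
      \<le> - (1 / beta * (g \<bullet> (Pmat J *v g)))
        + 1 / beta * ((norm g)\<^sup>2 * (1 / gamma) * eps_J + eps_g * norm g)"
    using mult_left_mono[OF inner_Pmat_Jt_ge, of "1 / beta"] beta by (simp add: algebra_simps)
  have residual: "pi * l1norm (c + J *v d) \<le> pi * (eps_c + eps_J * ?step)"
    using l1norm_residual_le[OF feas] mult_left_mono[OF norm_qp_step_le[OF beta] eps_J_nonneg]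
    unfolding d[symmetric] by (intro mult_left_mono pi_nonneg) linarith
  have "g \<bullet> d = - (gt \<bullet> ?u) + (gt - g) \<bullet> ?u - 1 / beta * (g \<bullet> ?p)"
    by (simp add: d inner_diff_left inner_diff_right)
  moreover have "(1 - tau) * pi * (l1norm c + eps_c) + pi * (eps_c + eps_J * ?step) - pi * l1norm c
      = pi * ((2 - tau) * eps_c + eps_J * ?step) - tau * pi * l1norm c"
    by (simp add: algebra_simps)
  ultimately show ?thesis
    using multiplier gradient curvature residual by linarith
qed

end

theorem corollary3p1:
  fixes f :: "real ^ 'n \<Rightarrow> real" and c :: "real ^ 'n \<Rightarrow> real ^ 'm"
    and g :: "real ^ 'n \<Rightarrow> real ^ 'n" and J :: "real ^ 'n \<Rightarrow> real ^ 'n ^ 'm"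
    and ft :: "real ^ 'n \<Rightarrow> real" and ct :: "real ^ 'n \<Rightarrow> real ^ 'm"
    and gt :: "real ^ 'n \<Rightarrow> real ^ 'n" and Jt :: "real ^ 'n \<Rightarrow> real ^ 'n ^ 'm"
    and eps_f eps_c eps_g eps_J gamma tau theta1 :: real
    and x :: "nat \<Rightarrow> real ^ 'n" and beta pi :: "nat \<Rightarrow> real"
    and d :: "nat \<Rightarrow> real ^ 'n" and k :: nat
  assumes dims: "CARD('m) < CARD('n)"
    and f_deriv: "\<And>y. (f has_derivative (\<lambda>h. g y \<bullet> h)) (at y)"
    and c_deriv: "\<And>y. (c has_derivative (\<lambda>h. J y *v h)) (at y)"
    and noise_f: "\<And>y. \<bar>ft y - f y\<bar> \<le> eps_f"
    and noise_c: "\<And>y. l1norm (ct y - c y) \<le> eps_c"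
    and noise_g: "\<And>y. norm (gt y - g y) \<le> eps_g"
    and noise_J: "\<And>y. opnorm12 (Jt y - J y) \<le> eps_J"
    and sigma: "\<And>j. sigma_min (J (x j)) \<ge> gamma"
    and gamma_gt: "gamma > eps_J"
    and beta_pos: "\<And>j. beta j > 0"
    and d_feas: "\<And>j. ct (x j) + Jt (x j) *v d j = 0"
    and d_opt: "\<And>j e. ct (x j) + Jt (x j) *v e = 0 \<Longrightarrow>
        1/2 * beta j * (norm (d j))\<^sup>2 + gt (x j) \<bullet> d j
          \<le> 1/2 * beta j * (norm e)\<^sup>2 + gt (x j) \<bullet> e"
    and tau: "0 < tau" "tau < 1"
    and pi_bound: "\<And>j. pi j \<ge> 1 / (1 - tau) *
        infnorm (matrix_inv (Jt (x j) ** transpose (Jt (x j))) *v (Jt (x j) *v gt (x j)))"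
    and theta1: "0 \<le> theta1" "theta1 < 1"
    and cond: "(1 - theta1) * (1 / beta k * (g (x k) \<bullet> (Pmat (J (x k)) *v g (x k)))
                  + tau * pi k * l1norm (c (x k)))
        \<ge> (let xk = x k; \<beta> = beta k; \<pi> = pi k;
               \<delta> = 1 / (gamma - eps_J); \<eta> = 1 / gamma in
             1 / \<beta> * ((norm (g xk))\<^sup>2 * \<eta> * eps_J + eps_g * norm (g xk))
             + eps_g * \<delta> * (l1norm (c xk) + eps_c)
             + \<pi> * ((2 - tau) * eps_c
                  + eps_J * (\<delta> * (l1norm (c xk) + eps_c)
                     + 1 / \<beta> * (norm (Pmat (J xk) *v g xk) + norm (g xk) * \<eta> * eps_J + eps_g))))"
  shows "g (x k) \<bullet> d k + pi k * l1norm (c (x k) + J (x k) *v d k) - pi k * l1norm (c (x k))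
    \<le> - theta1 * (1 / beta k * (g (x k) \<bullet> (Pmat (J (x k)) *v g (x k)))
                  + tau * pi k * l1norm (c (x k)))"
proof -
  interpret noisy_linearization "J (x k)" "Jt (x k)" "g (x k)" "gt (x k)" "c (x k)" "ct (x k)"
    eps_c eps_g eps_J gamma
    using noise_c noise_g noise_J sigma gamma_gt by unfold_locales
  let ?T = "1 / beta k * (g (x k) \<bullet> (Pmat (J (x k)) *v g (x k))) + tau * pi k * l1norm (c (x k))"
  have "- theta1 * ?T = - ?T + (1 - theta1) * ?T"
    by (simp add: left_diff_distrib)
  then show ?thesis
    using model_reduction_le[OF beta_pos tau pi_bound d_feas d_opt] cond unfolding Let_def
    by linarith
qed

end
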